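(* Let $n>1$, let $D$ be a set, and let $f:\mathcal{S}^n\to D$ be (rightward) memoryless, witnessed by a rightward or leftward function $g:\mathcal{S}^{n-1}\to D$ and a binary operator $\oplus:D\times D\to D$ (so $f(\sigma\bullet[\delta])=f(\sigma)\oplus g(\delta)$ for all $\sigma,\delta$). Define $h:\mathcal{S}_D\to D$ by $h([])=f([])$ and $h(x\bullet[a])=h(x)\oplus a$ for all $x\in\mathcal{S}_D$, $a\in D$ (the summarized version of $f$). If $h$ is $\odot$-homomorphic for some binary operator $\odot:D\times D\to D$, then $f$ is $\odot$-homomorphic.
   Context: $\mathit{Sc}$ is a set of scalars. $\mathcal{S}^0=\mathit{Sc}$ and, for $n\ge1$, $\mathcal{S}^n$ is the set of finite sequences of elements of $\mathcal{S}^{n-1}$; $\mathcal{S}_D$ is the set of finite sequences of elements of $D$; $\bullet$ is concatenation, $[]$ the empty sequence, $[a]$ a one-element sequence. A function $g$ on sequences is rightward if there is $\oplus'$ with $g(x\bullet[a])=g(x)\oplus' a$ for all $x,a$, leftward if there is $\otimes'$ with $g([a]\bullet x)=a\otimes' g(x)$. A function $F$ on sequences is $\odot$-homomorphic if $F(x\bullet y)=F(x)\odot F(y)$ for all sequences $x,y$ in its domain. *)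

theory Defs
  imports Main
begin

text \<open>A sequence in S^(n+1) is represented by the constructor Seq
  applied to a list; functions "on sequences" are taken as functions on lists.\<close>

datatype 'a nseq = Sc 'a | Seq "'a nseq list"

primrec Sn :: "nat \<Rightarrow> 'a nseq set" where
  "Sn 0 = range Sc"
| "Sn (Suc n) = Seq ` lists (Sn n)"

definition rightward :: "'b set \<Rightarrow> ('b list \<Rightarrow> 'd) \<Rightarrow> bool" where
  "rightward A g \<longleftrightarrow>
     (\<exists>op :: 'd \<Rightarrow> 'b \<Rightarrow> 'd. \<forall>x\<in>lists A. \<forall>a\<in>A. g (x @ [a]) = op (g x) a)"

definition leftward :: "'b set \<Rightarrow> ('b list \<Rightarrow> 'd) \<Rightarrow> bool" where
  "leftward A g \<longleftrightarrow>
     (\<exists>op :: 'b \<Rightarrow> 'd \<Rightarrow> 'd. \<forall>x\<in>lists A. \<forall>a\<in>A. g ([a] @ x) = op a (g x))"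

definition homomorphic :: "'b list set \<Rightarrow> ('b list \<Rightarrow> 'd) \<Rightarrow> ('d \<Rightarrow> 'd \<Rightarrow> 'd) \<Rightarrow> bool" where
  "homomorphic Dom F op \<longleftrightarrow> (\<forall>x\<in>Dom. \<forall>y\<in>Dom. F (x @ y) = op (F x) (F y))"

end

theory Submission
  imports Defs
begin

text \<open>Reading a sequence of level-n sequences through g turns f into its summarized
  version: f coincides with h applied to the list of g-summaries of the elements, because
  both are folds of the same operator from the same start value. Homomorphy of h then
  transfers to f, since mapping g commutes with concatenation.\<close>

lemma Sn_diff_Suc_eq:
  assumes "n > 1"
  shows "Sn (n - 1) = Seq ` lists (Sn (n - 2))"
proof -
  have "n - 1 = Suc (n - 2)" using assms by simp
  then show ?thesis by simp
qed

lemma snoc_fold_eq_map: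
  assumes step: "\<And>\<sigma> a. \<sigma> \<in> lists A \<Longrightarrow> a \<in> A \<Longrightarrow> f (\<sigma> @ [a]) = oplus (f \<sigma>) (G a)"
    and h_Nil: "h [] = f []"
    and h_snoc: "\<And>x b. h (x @ [b]) = oplus (h x) b"
    and "s \<in> lists A"
  shows "f s = h (map G s)"
  using \<open>s \<in> lists A\<close>
proof (induction s rule: rev_induct)
  case Nil
  then show ?case using h_Nil by simp
next
  case (snoc a \<sigma>)
  then have "f (\<sigma> @ [a]) = oplus (h (map G \<sigma>)) (G a)" using step by simp
  then show ?case using h_snoc by simp
qed

lemma homomorphic_through_map:
  assumes "\<And>s. s \<in> lists A \<Longrightarrow> f s = h (map G s)"
    and "homomorphic UNIV h odot"
  shows "homomorphic (lists A) f odot"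
  using assms unfolding homomorphic_def by simp

theorem proposition4p6:
  fixes n :: nat
    and f :: "'a nseq list \<Rightarrow> 'd"
    and g :: "'a nseq list \<Rightarrow> 'd"
    and oplus odot :: "'d \<Rightarrow> 'd \<Rightarrow> 'd"
    and h :: "'d list \<Rightarrow> 'd"
  assumes "n > 1"
    and "rightward (Sn (n - 2)) g \<or> leftward (Sn (n - 2)) g"
    and "\<forall>\<sigma>\<in>lists (Sn (n - 1)). \<forall>\<delta>\<in>lists (Sn (n - 2)).
           f (\<sigma> @ [Seq \<delta>]) = oplus (f \<sigma>) (g \<delta>)"
    and "h [] = f []"
    and "\<forall>x a. h (x @ [a]) = oplus (h x) a"
    and "homomorphic UNIV h odot"
  shows "homomorphic (lists (Sn (n - 1))) f odot"
proof -
  define G where "G x = (case x of Seq \<delta> \<Rightarrow> g \<delta> | Sc _ \<Rightarrow> undefined)" for x :: "'a nseq"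
  have step: "f (\<sigma> @ [a]) = oplus (f \<sigma>) (G a)"
    if \<sigma>: "\<sigma> \<in> lists (Sn (n - 1))" and a: "a \<in> Sn (n - 1)" for \<sigma> a
  proof -
    obtain \<delta> where "a = Seq \<delta>" "\<delta> \<in> lists (Sn (n - 2))"
      using a Sn_diff_Suc_eq[OF assms(1)] by blast
    then show ?thesis using \<sigma> assms(3) by (simp add: G_def)
  qed
  have "f s = h (map G s)" if "s \<in> lists (Sn (n - 1))" for s
    using snoc_fold_eq_map[of "Sn (n - 1)" f oplus G h s] step assms(4,5) that by blast
  then show ?thesis using homomorphic_through_map assms(6) by blast
qed

end
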